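(* Let $r\in(0,1]$, $t>0$, $a\ge0$ and $x>0$. If $S(x;r,t,a)=0$, where \[ S(x;r,t,a)=4ax^3-\{8a^2+4a(3r+2)t-t^2\}x^2+2\big[2a^3-2a^2(5r-2)t+a\{r(6r-1)+1\}t^2-(r+1)t^3\big]x+(r-1)^2t^2\{a^2-a(4r-2)t+t^2\}, \] then $\rho(x;r,t,a)=0$.
   Context: The three-parametric MP density $\rho(x;r,t,a)$ ($r\in(0,1]$, $t>0$, $a\ge0$) is the density of the weak limit, as $N,M\to\infty$ with $N/M\to r$, of $\frac1N\sum_{j}\delta_{X^N_j(t)/M}$, where $X^N_j$ solve $dX^N_j=2\sqrt{X^N_j}dB_j+2(M-N+1)dt+4X^N_j\sum_{k\neq j}\frac{dt}{X^N_j-X^N_k}$ with independent standard Brownian motions $B_j$ and $X^N_j(0)=aM$; equivalently its Stieltjes transform $G$ solves $z=\frac1G+\frac{t}{1-rtG}+\frac{a}{(1-rtG)^2}$, and $\rho(x)=-\frac1\pi\lim_{\varepsilon\to0}\Im G(x+i\varepsilon)$. *)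

theory Defs
  imports "HOL-Complex_Analysis.Complex_Analysis"
begin

definition MP_S :: "real \<Rightarrow> real \<Rightarrow> real \<Rightarrow> real \<Rightarrow> real" where
  "MP_S x r t a =
     4*a*x^3 - (8*a^2 + 4*a*(3*r+2)*t - t^2)*x^2
     + 2*(2*a^3 - 2*a^2*(5*r-2)*t + a*(r*(6*r-1)+1)*t^2 - (r+1)*t^3)*x
     + (r-1)^2*t^2*(a^2 - a*(4*r-2)*t + t^2)"

text \<open>G is the Stieltjes transform of the three-parametric MP law: holomorphic on the
  upper half-plane, solving z = 1/G + t/(1-rtG) + a/(1-rtG)^2 there, with Im G \<le> 0
  and the normalisation z G(z) \<rightarrow> 1 at infinity (taken along the imaginary axis).\<close>
definition MP_stieltjes :: "real \<Rightarrow> real \<Rightarrow> real \<Rightarrow> (complex \<Rightarrow> complex) \<Rightarrow> bool" where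
  "MP_stieltjes r t a G \<longleftrightarrow>
     G holomorphic_on {z. 0 < Im z} \<and>
     (\<forall>z. 0 < Im z \<longrightarrow>
        G z \<noteq> 0 \<and> 1 - of_real (r*t) * G z \<noteq> 0 \<and> Im (G z) \<le> 0 \<and>
        z = 1 / G z + of_real t / (1 - of_real (r*t) * G z)
              + of_real a / (1 - of_real (r*t) * G z)^2) \<and>
     ((\<lambda>y::real. \<i> * of_real y * G (\<i> * of_real y)) \<longlongrightarrow> 1) at_top"

text \<open>rho(x) = -(1/pi) lim_{eps -> 0+} Im G(x + i eps).\<close>
definition MP_density_integrand :: "(complex \<Rightarrow> complex) \<Rightarrow> real \<Rightarrow> real \<Rightarrow> real" where
  "MP_density_integrand G x \<epsilon> = -(1/pi) * Im (G (of_real x + \<i> * of_real \<epsilon>))"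

end

theory Submission
  imports Defs
begin

text \<open>Clearing denominators, g = G(z) is a root of a cubic whose coefficients are
  polynomial in z. At a real point z = x the coefficients are real and the discriminant is
  r^2 t^2 S(x), so for S(x) = 0 the cubic has no nonreal root. Since G(x + i\<epsilon>) stays bounded
  and is a root of the cubic at x + i\<epsilon>, which differs from the cubic at x by O(\<epsilon>), every
  limit point of G(x + i\<epsilon>) is a real root; hence Im G(x + i\<epsilon>) \<rightarrow> 0.\<close>

definition cubic_discriminant :: "real \<Rightarrow> real \<Rightarrow> real \<Rightarrow> real \<Rightarrow> real" where
  "cubic_discriminant c3 c2 c1 c0 =
     c2^2*c1^2 - 4*c3*c1^3 - 4*c2^3*c0 - 27*c3^2*c0^2 + 18*c3*c2*c1*c0"

lemma cubic_discriminant_neg_if_nonreal_root: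
  fixes c3 c2 c1 c0 :: real and w :: complex
  assumes c3: "c3 \<noteq> 0" and nonreal: "Im w \<noteq> 0"
    and root: "of_real c3 * w^3 + of_real c2 * w^2 + of_real c1 * w + of_real c0 = 0"
  shows "cubic_discriminant c3 c2 c1 c0 < 0"
proof -
  obtain p q where w: "w = Complex p q"
    by (cases w)
  have q: "q \<noteq> 0"
    using nonreal w by simp
  have re: "c3*(p^3 - 3*p*q^2) + c2*(p^2 - q^2) + c1*p + c0 = 0"
    and "q * (c3*(3*p^2 - q^2) + c2*(2*p) + c1) = 0"
    using arg_cong[OF root, of Re] arg_cong[OF root, of Im] unfolding w
    by (simp_all add: power2_eq_square power3_eq_cube algebra_simps)
  then have im: "c3*(3*p^2 - q^2) + c2*(2*p) + c1 = 0"
    using q by simp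
  \<comment> \<open>Vieta: the roots are w, its conjugate and the real root u, and the discriminant is
    c3^4 times the product of the squared differences of the roots.\<close>
  define u where "u = -c2/c3 - 2*p"
  have c2: "c2 = -c3*(2*p + u)"
    using c3 by (simp add: u_def field_simps)
  have c1: "c1 = c3*(p^2 + q^2 + 2*p*u)"
    using im c2 by (simp add: algebra_simps power2_eq_square)
  have c0: "c0 = -c3*(p^2 + q^2)*u"
    using re c1 c2 by (simp add: algebra_simps power2_eq_square power3_eq_cube)
  have "cubic_discriminant c3 c2 c1 c0 = -4*q^2*c3^4*((p - u)^2 + q^2)^2"
    unfolding cubic_discriminant_def c0 c1 c2 by algebra
  moreover have "(p - u)^2 + q^2 > 0"
    using q by (simp add: add_nonneg_pos)
  ultimately show ?thesis
    using c3 q by simp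
qed

lemma tendsto_Im_0_if_nonreal_zero_free:
  fixes f :: "complex \<Rightarrow> complex" and h :: "'a \<Rightarrow> complex"
  assumes "continuous_on UNIV f" "\<And>g. Im g \<noteq> 0 \<Longrightarrow> f g \<noteq> 0"
    and "\<forall>\<^sub>F y in F. norm (h y) \<le> B" "((\<lambda>y. f (h y)) \<longlongrightarrow> 0) F"
  shows "((\<lambda>y. Im (h y)) \<longlongrightarrow> 0) F"
proof (rule tendstoI)
  fix e :: real
  assume "0 < e"
  define K where "K = cball 0 B \<inter> {g. e \<le> \<bar>Im g\<bar>}"
  have "compact K"
    unfolding K_def by (intro compact_Int_closed compact_cball closed_Collect_le continuous_intros)
  have "\<exists>m>0. \<forall>g\<in>K. m \<le> norm (f g)"
  proof (cases "K = {}")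
    case False
    then obtain g0 where "g0 \<in> K" and g0: "\<And>g. g \<in> K \<Longrightarrow> norm (f g0) \<le> norm (f g)"
      using continuous_attains_inf[OF \<open>compact K\<close> False, of "\<lambda>g. norm (f g)"]
        continuous_on_subset[OF assms(1)] by (metis continuous_on_norm subset_UNIV)
    then have "f g0 \<noteq> 0"
      using assms(2) \<open>0 < e\<close> by (auto simp: K_def)
    then show ?thesis
      using g0 by (intro exI[of _ "norm (f g0)"]) auto
  qed (intro exI[of _ 1], simp)
  then obtain m where "0 < m" and m: "\<And>g. g \<in> K \<Longrightarrow> m \<le> norm (f g)"
    by blast
  have "\<forall>\<^sub>F y in F. norm (f (h y)) < m"
    using order_tendstoD(2)[OF tendsto_norm_zero[OF assms(4)] \<open>0 < m\<close>] by simp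
  with assms(3) show "\<forall>\<^sub>F y in F. dist (Im (h y)) 0 < e"
  proof eventually_elim
    case (elim y)
    then have "h y \<notin> K"
      using m by force
    with elim show ?case
      by (auto simp: K_def)
  qed
qed

lemma MP_rhs_tendsto_0_at_infinity:
  fixes s t a :: "'a::real_normed_field"
  assumes "s \<noteq> 0"
  shows "((\<lambda>g. 1/g + t/(1 - s*g) + a/(1 - s*g)^2) \<longlongrightarrow> 0) at_infinity"
proof -
  have "filterlim (\<lambda>g. 1 + (-s)*g) at_infinity at_infinity"
    using assms by (intro tendsto_add_filterlim_at_infinity tendsto_const
        tendsto_mult_filterlim_at_infinity[OF tendsto_const] filterlim_ident) auto
  then have k: "filterlim (\<lambda>g. 1 - s*g) at_infinity at_infinity"
    by simp
  have "((\<lambda>g. 1/g + t/(1 - s*g) + a/(1 - s*g)^2) \<longlongrightarrow> 0 + 0 + 0) at_infinity"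
    unfolding power2_eq_square
    by (intro tendsto_add tendsto_divide_0[OF tendsto_const] filterlim_ident k
        filterlim_at_infinity_times)
  then show ?thesis
    by simp
qed

lemma MP_equation_solutions_bounded:
  fixes s t a :: "'a::real_normed_field" and x :: real
  assumes "s \<noteq> 0" "0 < x"
  obtains B where "\<And>g. x \<le> norm (1/g + t/(1 - s*g) + a/(1 - s*g)^2) \<Longrightarrow> norm g < B"
proof -
  have "\<forall>\<^sub>F g in at_infinity. norm (1/g + t/(1 - s*g) + a/(1 - s*g)^2) < x"
    using order_tendstoD(2)[OF tendsto_norm_zero[OF MP_rhs_tendsto_0_at_infinity[OF assms(1)]]] assms(2)
    by simp
  then obtain B where "\<And>g. B \<le> norm g \<Longrightarrow> norm (1/g + t/(1 - s*g) + a/(1 - s*g)^2) < x"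
    unfolding eventually_at_infinity by blast
  then show ?thesis
    using that by (meson not_le)
qed

definition MP_cubic :: "real \<Rightarrow> real \<Rightarrow> real \<Rightarrow> complex \<Rightarrow> complex \<Rightarrow> complex" where
  "MP_cubic r t a z g =
     z * g * (1 - of_real (r*t) * g)^2 - (1 - of_real (r*t) * g)^2
     - of_real t * g * (1 - of_real (r*t) * g) - of_real a * g"

lemma MP_equation_imp_MP_cubic_eq_0:
  assumes "g \<noteq> 0" "1 - of_real (r*t) * g \<noteq> 0"
    and "z = 1 / g + of_real t / (1 - of_real (r*t) * g) + of_real a / (1 - of_real (r*t) * g)^2"
  shows "MP_cubic r t a z g = 0"
proof -
  define k where "k = 1 - of_real (r*t) * g"
  have "z * g * k^2 = k^2 + of_real t * g * k + of_real a * g"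
    using assms unfolding k_def[symmetric] by (simp add: field_simps power2_eq_square)
  then show ?thesis
    unfolding MP_cubic_def k_def by (simp add: algebra_simps)
qed

lemma MP_cubic_add:
  "MP_cubic r t a (z + w) g = MP_cubic r t a z g + w * g * (1 - of_real (r*t) * g)^2"
  by (simp add: MP_cubic_def algebra_simps)

lemma MP_cubic_of_real:
  "MP_cubic r t a (of_real x) g =
     of_real (x*r^2*t^2) * g^3 + of_real (-2*x*r*t - r^2*t^2 + r*t^2) * g^2
     + of_real (x + 2*r*t - t - a) * g + of_real (-1)"
  by (simp add: MP_cubic_def algebra_simps power2_eq_square power3_eq_cube)

lemma cubic_discriminant_MP_cubic:
  "cubic_discriminant (x*r^2*t^2) (-2*x*r*t - r^2*t^2 + r*t^2) (x + 2*r*t - t - a) (-1)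
     = r^2*t^2 * MP_S x r t a"
  by (simp add: cubic_discriminant_def MP_S_def algebra_simps power2_eq_square power3_eq_cube)

lemma MP_cubic_of_real_no_nonreal_root:
  assumes "r \<noteq> 0" "t \<noteq> 0" "x \<noteq> 0" "MP_S x r t a = 0" "Im g \<noteq> 0"
  shows "MP_cubic r t a (of_real x) g \<noteq> 0"
proof
  assume "MP_cubic r t a (of_real x) g = 0"
  then have "r^2*t^2 * MP_S x r t a < 0"
    unfolding cubic_discriminant_MP_cubic[symmetric] using assms
    by (intro cubic_discriminant_neg_if_nonreal_root) (simp_all add: MP_cubic_of_real)
  then show False
    using assms(4) by simp
qed

lemma norm_MP_cubic_diff_le:
  assumes "norm g \<le> B"
  shows "norm (MP_cubic r t a (z + w) g - MP_cubic r t a z g) \<le> norm w * (B * (1 + \<bar>r*t\<bar> * B)^2)"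
proof -
  have "norm (1 - of_real (r*t) * g) \<le> 1 + \<bar>r*t\<bar> * norm g"
    using norm_triangle_ineq4[of 1 "of_real (r*t) * g"] by (simp add: norm_mult abs_mult)
  also have "\<dots> \<le> 1 + \<bar>r*t\<bar> * B"
    using assms by (simp add: mult_left_mono)
  finally have "norm (g * (1 - of_real (r*t) * g)^2) \<le> B * (1 + \<bar>r*t\<bar> * B)^2"
    using assms order_trans[OF norm_ge_zero assms]
    by (auto simp: norm_mult norm_power intro!: mult_mono power_mono)
  then show ?thesis
    by (simp add: MP_cubic_add norm_mult mult.assoc mult_left_mono)
qed

lemma tendsto_MP_cubic_shift:
  assumes "(w \<longlongrightarrow> 0) F"
    and "\<forall>\<^sub>F y in F. norm (h y) \<le> B \<and> MP_cubic r t a (z + w y) (h y) = 0"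
  shows "((\<lambda>y. MP_cubic r t a z (h y)) \<longlongrightarrow> 0) F"
proof (rule Lim_null_comparison)
  show "\<forall>\<^sub>F y in F. norm (MP_cubic r t a z (h y)) \<le> norm (w y) * (B * (1 + \<bar>r*t\<bar> * B)^2)"
    using assms(2) by eventually_elim (metis norm_MP_cubic_diff_le diff_0 norm_minus_cancel)
  show "((\<lambda>y. norm (w y) * (B * (1 + \<bar>r*t\<bar> * B)^2)) \<longlongrightarrow> 0) F"
    by (intro tendsto_mult_left_zero tendsto_norm_zero assms(1))
qed

lemma MP_stieltjes_eventually_bounded_root:
  assumes "MP_stieltjes r t a G" "r * t \<noteq> 0" "x \<noteq> 0"
  obtains B where "\<forall>\<^sub>F y in at_right 0. norm (G (of_real x + \<i> * of_real y)) \<le> B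
      \<and> MP_cubic r t a (of_real x + \<i> * of_real y) (G (of_real x + \<i> * of_real y)) = 0"
proof -
  define k :: "complex \<Rightarrow> complex" where "k g = 1 - of_real (r*t) * g" for g
  have eqn: "G z \<noteq> 0 \<and> k (G z) \<noteq> 0 \<and> z = 1 / G z + of_real t / k (G z) + of_real a / (k (G z))^2"
    if "0 < Im z" for z
    using assms(1) that unfolding MP_stieltjes_def k_def by blast
  obtain B where B: "\<And>g. \<bar>x\<bar> \<le> norm (1/g + of_real t / k g + of_real a / (k g)^2) \<Longrightarrow> norm g < B"
    using MP_equation_solutions_bounded[of "of_real (r*t)" "\<bar>x\<bar>"] assms(2,3) unfolding k_def by auto
  show ?thesis
  proof (rule that, rule eventually_at_rightI[of 0 1])
    fix y :: real
    assume "y \<in> {0<..<1}"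
    moreover have "\<bar>x\<bar> \<le> norm (of_real x + \<i> * of_real y)"
      using abs_Re_le_cmod[of "of_real x + \<i> * of_real y"] by simp
    ultimately show "norm (G (of_real x + \<i> * of_real y)) \<le> B
        \<and> MP_cubic r t a (of_real x + \<i> * of_real y) (G (of_real x + \<i> * of_real y)) = 0"
      using eqn[of "of_real x + \<i> * of_real y"] B[of "G (of_real x + \<i> * of_real y)"]
      by (auto simp: k_def intro!: MP_equation_imp_MP_cubic_eq_0 less_imp_le)
  qed simp
qed

theorem lemma2p4:
  fixes r t a x :: real and G :: "complex \<Rightarrow> complex"
  assumes "0 < r" "r \<le> 1" "0 < t" "0 \<le> a" "0 < x"
    and "MP_stieltjes r t a G"
    and "MP_S x r t a = 0"
  shows "(MP_density_integrand G x \<longlongrightarrow> 0) (at_right 0)"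
proof -
  define h where "h y = G (of_real x + \<i> * of_real y)" for y
  have "r * t \<noteq> 0" "x \<noteq> 0"
    using assms(1,3,5) by auto
  then obtain B where near_x: "\<forall>\<^sub>F y in at_right 0. norm (h y) \<le> B
      \<and> MP_cubic r t a (of_real x + \<i> * of_real y) (h y) = 0"
    using MP_stieltjes_eventually_bounded_root[OF assms(6)] unfolding h_def by blast
  have "((\<lambda>y. \<i> * of_real y) \<longlongrightarrow> 0) (at_right 0)"
    by (auto intro!: tendsto_eq_intros)
  then have "((\<lambda>y. MP_cubic r t a (of_real x) (h y)) \<longlongrightarrow> 0) (at_right 0)"
    using near_x by (rule tendsto_MP_cubic_shift)
  then have "((\<lambda>y. Im (h y)) \<longlongrightarrow> 0) (at_right 0)"
    using assms by (intro tendsto_Im_0_if_nonreal_zero_free[of "MP_cubic r t a (of_real x)"]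
        eventually_mono[OF near_x] MP_cubic_of_real_no_nonreal_root)
      (auto simp: MP_cubic_def intro!: continuous_intros)
  then have "((\<lambda>y. -(1/pi) * Im (h y)) \<longlongrightarrow> -(1/pi) * 0) (at_right 0)"
    by (intro tendsto_mult tendsto_const)
  then show ?thesis
    by (simp add: MP_density_integrand_def[abs_def] h_def)
qed

end
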